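(* Let $k\geq3$, $A=\{0,1,\dots,k-1\}$, $N=k-1$ and let $T\colon A^{N^2}\to A$ be given by $T(x_{1,1},\dots,x_{1,N},\dots,x_{N,1},\dots,x_{N,N})=1$ if $x_{i,j}=i$ for all $i,j$ or $x_{i,j}=j$ for all $i,j$, and $0$ otherwise. Then \[\langle\{T\}\rangle\subseteq\{T\}^{**}\subseteq\{T\}^{*(1)*}\subseteq\mathrm{Pol}\bigl(\{U\subseteq A: 0\in U\}\bigr)\cap\mathrm{Pol}\bigl(\{\theta\in\mathrm{Eq}(A): (0,1)\in\theta\}\bigr),\] where $\mathrm{Eq}(A)$ denotes the set of all equivalence relations on $A$.
   Context: An $m$-ary $g$ commutes with an $n$-ary $h$ if $g\bigl((h((x_{ij})_{j}))_{i}\bigr)=h\bigl((g((x_{ij})_{i}))_{j}\bigr)$ for all $(x_{ij})\in A^{m\times n}$. For a set $F$ of finitary operations on $A$ (positive arity), $F^*$ is the set of all such operations commuting with every member of $F$; superscripts apply left to right, so $\{T\}^{**}=(\{T\}^* )^*$ and $\{T\}^{*(1)*}=((\{T\}^* )^{(1)})^*$, where $G^{(1)}$ is the set of unary members of $G$. $\langle\{T\}\rangle$ is the clone generated by $T$. For a set $Q$ of relations on $A$, $\mathrm{Pol}(Q)$ is the set of finitary operations preserving every relation in $Q$ (unary relations $U$ and binary relations $\theta$ are viewed as relations of arity 1 and 2). *)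

theory Defs
  imports "HOL-Library.FuncSet"
begin

text \<open>A finitary operation on a carrier A is represented as a pair (n, f) with
  n > 0 its arity and f a function from A^n (tuples = functions on {..<n}, extensional)
  into A, itself extensional (value undefined outside A^n).\<close>

definition tuples :: "'a set \<Rightarrow> nat \<Rightarrow> (nat \<Rightarrow> 'a) set" where
  "tuples A n = PiE {..<n} (\<lambda>_. A)"

definition ops :: "'a set \<Rightarrow> (nat \<times> ((nat \<Rightarrow> 'a) \<Rightarrow> 'a)) set" where
  "ops A = {(n, f). 0 < n \<and> f \<in> tuples A n \<rightarrow> A \<and> f \<in> extensional (tuples A n)}"

definition commutes :: "'a set \<Rightarrow> nat \<times> ((nat \<Rightarrow> 'a) \<Rightarrow> 'a) \<Rightarrow> nat \<times> ((nat \<Rightarrow> 'a) \<Rightarrow> 'a) \<Rightarrow> bool" where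
  "commutes A G H = (case G of (m, g) \<Rightarrow> case H of (n, h) \<Rightarrow>
     (\<forall>x :: nat \<Rightarrow> nat \<Rightarrow> 'a. (\<forall>i<m. \<forall>j<n. x i j \<in> A) \<longrightarrow>
        g (\<lambda>i\<in>{..<m}. h (\<lambda>j\<in>{..<n}. x i j)) = h (\<lambda>j\<in>{..<n}. g (\<lambda>i\<in>{..<m}. x i j))))"

definition centralizer :: "'a set \<Rightarrow> (nat \<times> ((nat \<Rightarrow> 'a) \<Rightarrow> 'a)) set \<Rightarrow> (nat \<times> ((nat \<Rightarrow> 'a) \<Rightarrow> 'a)) set" where
  "centralizer A F = {H \<in> ops A. \<forall>G\<in>F. commutes A G H}"

definition unary_part :: "(nat \<times> ((nat \<Rightarrow> 'a) \<Rightarrow> 'a)) set \<Rightarrow> (nat \<times> ((nat \<Rightarrow> 'a) \<Rightarrow> 'a)) set" where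
  "unary_part G = {H \<in> G. fst H = 1}"

definition proj :: "'a set \<Rightarrow> nat \<Rightarrow> nat \<Rightarrow> nat \<times> ((nat \<Rightarrow> 'a) \<Rightarrow> 'a)" where
  "proj A n i = (n, \<lambda>x\<in>tuples A n. x i)"

definition compose :: "'a set \<Rightarrow> nat \<times> ((nat \<Rightarrow> 'a) \<Rightarrow> 'a) \<Rightarrow> nat \<Rightarrow> (nat \<Rightarrow> (nat \<Rightarrow> 'a) \<Rightarrow> 'a) \<Rightarrow> nat \<times> ((nat \<Rightarrow> 'a) \<Rightarrow> 'a)" where
  "compose A G n hs = (n, \<lambda>x\<in>tuples A n. snd G (\<lambda>i\<in>{..<fst G}. hs i x))"

definition is_clone :: "'a set \<Rightarrow> (nat \<times> ((nat \<Rightarrow> 'a) \<Rightarrow> 'a)) set \<Rightarrow> bool" where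
  "is_clone A C \<longleftrightarrow> C \<subseteq> ops A \<and> (\<forall>n i. 0 < n \<and> i < n \<longrightarrow> proj A n i \<in> C) \<and>
     (\<forall>G\<in>C. \<forall>n hs. 0 < n \<and> (\<forall>i<fst G. (n, hs i) \<in> C) \<longrightarrow> compose A G n hs \<in> C)"

definition clone_gen :: "'a set \<Rightarrow> (nat \<times> ((nat \<Rightarrow> 'a) \<Rightarrow> 'a)) set \<Rightarrow> (nat \<times> ((nat \<Rightarrow> 'a) \<Rightarrow> 'a)) set" where
  "clone_gen A F = \<Inter> {C. is_clone A C \<and> F \<subseteq> C}"

definition Pol_unary :: "'a set \<Rightarrow> 'a set set \<Rightarrow> (nat \<times> ((nat \<Rightarrow> 'a) \<Rightarrow> 'a)) set" where
  "Pol_unary A Q = {(n, f) \<in> ops A. \<forall>U\<in>Q. \<forall>x\<in>tuples A n. (\<forall>i<n. x i \<in> U) \<longrightarrow> f x \<in> U}"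

definition Pol_binary :: "'a set \<Rightarrow> ('a \<times> 'a) set set \<Rightarrow> (nat \<times> ((nat \<Rightarrow> 'a) \<Rightarrow> 'a)) set" where
  "Pol_binary A Q = {(n, f) \<in> ops A. \<forall>\<theta>\<in>Q. \<forall>x\<in>tuples A n. \<forall>y\<in>tuples A n.
       (\<forall>i<n. (x i, y i) \<in> \<theta>) \<longrightarrow> (f x, f y) \<in> \<theta>}"

text \<open>The operation T of arity N^2, N = k-1, on A = {0..<k}. Argument position
  p = (i-1)*N + (j-1) carries x_{i,j} (1 \<le> i,j \<le> N).\<close>
definition T_op :: "nat \<Rightarrow> nat \<times> ((nat \<Rightarrow> nat) \<Rightarrow> nat)" where
  "T_op k = (let N = k - 1 in
     (N^2, \<lambda>x\<in>tuples {0..<k} (N^2).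
        if (\<forall>p<N^2. x p = p div N + 1) \<or> (\<forall>p<N^2. x p = p mod N + 1) then 1 else 0))"

end

theory Submission
  imports Defs
begin

(* The first two inclusions hold for any set F of operations: F** is a clone containing F,
   and * reverses inclusions.

   For the third, every self-map f of A with f 0 = f 1 = 0 commutes with T. Indeed T only takes
   the values 0 and 1, which f sends to 0; and T vanishes on every argument with entries in the
   image of f, because a special argument of T takes all the values 1, ..., N while f takes at most
   N - 1 nonzero values. Hence every member h of {T}^{*(1)*} commutes with all such f, i.e.
   f (h y) = h (f y). Choosing f suitably gives the preservation properties: for U containing 0,
   write a tuple over U as f y with f mapping A into U; for an equivalence containing (0, 1), let
   f pick a representative of each class, namely 0 for the class of 0, so that h x and h y
   are congruent to the same element f (h x) = f (h y). *)

lemma tuples_restrict: "(\<And>j. j < n \<Longrightarrow> y j \<in> A) \<Longrightarrow> (\<lambda>j\<in>{..<n}. y j) \<in> tuples A n"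
  unfolding tuples_def by auto

lemma ops_apply_in: "(n, f) \<in> ops A \<Longrightarrow> x \<in> tuples A n \<Longrightarrow> f x \<in> A"
  unfolding ops_def by auto

lemma commutes_sym: "commutes A G H \<longleftrightarrow> commutes A H G"
  unfolding commutes_def by (cases G; cases H) auto

lemma centralizer_subset_ops: "centralizer A F \<subseteq> ops A"
  unfolding centralizer_def by auto

lemma centralizer_antimono: "F \<subseteq> G \<Longrightarrow> centralizer A G \<subseteq> centralizer A F"
  unfolding centralizer_def by auto

lemma subset_centralizer_centralizer:
  assumes "F \<subseteq> ops A"
  shows "F \<subseteq> centralizer A (centralizer A F)"
  using assms commutes_sym unfolding centralizer_def by blast

lemma proj_in_ops: "i < n \<Longrightarrow> proj A n i \<in> ops A"
  unfolding proj_def ops_def tuples_def by auto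

lemma commutes_proj:
  assumes F: "(p, \<phi>) \<in> ops A" and i: "i < n"
  shows "commutes A (p, \<phi>) (proj A n i)"
  unfolding proj_def commutes_def
proof (simp only: prod.case, intro allI impI)
  fix x :: "nat \<Rightarrow> nat \<Rightarrow> 'a" assume x: "\<forall>a<p. \<forall>j<n. x a j \<in> A"
  have rows: "(\<lambda>a\<in>{..<p}. restrict (\<lambda>y. y i) (tuples A n) (\<lambda>j\<in>{..<n}. x a j))
      = (\<lambda>a\<in>{..<p}. x a i)"
    using x i by (intro restrict_ext) (auto simp: tuples_restrict)
  have "(\<lambda>j\<in>{..<n}. \<phi> (\<lambda>a\<in>{..<p}. x a j)) \<in> tuples A n"
    using x by (intro tuples_restrict ops_apply_in[OF F]) auto
  then show "\<phi> (\<lambda>a\<in>{..<p}. restrict (\<lambda>y. y i) (tuples A n) (\<lambda>j\<in>{..<n}. x a j)) =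
      restrict (\<lambda>y. y i) (tuples A n) (\<lambda>j\<in>{..<n}. \<phi> (\<lambda>a\<in>{..<p}. x a j))"
    using rows i by simp
qed

lemma compose_in_ops:
  assumes "(m, g) \<in> ops A" and "\<And>i. i < m \<Longrightarrow> (n, hs i) \<in> ops A" and "0 < n"
  shows "compose A (m, g) n hs \<in> ops A"
  using assms unfolding compose_def ops_def
  by (auto intro!: ops_apply_in[OF assms(1)] tuples_restrict ops_apply_in[OF assms(2)])

lemma commutes_compose:
  assumes F: "(p, \<phi>) \<in> ops A" and hs: "\<And>i. i < m \<Longrightarrow> (n, hs i) \<in> ops A"
    and Fg: "commutes A (p, \<phi>) (m, g)"
    and Fhs: "\<And>i. i < m \<Longrightarrow> commutes A (p, \<phi>) (n, hs i)"
  shows "commutes A (p, \<phi>) (compose A (m, g) n hs)"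
  unfolding compose_def commutes_def
proof (simp only: prod.case fst_conv snd_conv, intro allI impI)
  fix x :: "nat \<Rightarrow> nat \<Rightarrow> 'a" assume x: "\<forall>a<p. \<forall>j<n. x a j \<in> A"
  let ?row = "\<lambda>a. \<lambda>j\<in>{..<n}. x a j"
  let ?col = "\<lambda>j\<in>{..<n}. \<phi> (\<lambda>a\<in>{..<p}. x a j)"
  let ?gh = "\<lambda>y. g (\<lambda>i\<in>{..<m}. hs i y)"
  have row: "?row a \<in> tuples A n" if "a < p" for a
    using x that by (auto intro!: tuples_restrict)
  have col: "?col \<in> tuples A n"
    using x by (intro tuples_restrict ops_apply_in[OF F]) auto
  have "\<phi> (\<lambda>a\<in>{..<p}. restrict ?gh (tuples A n) (?row a)) = \<phi> (\<lambda>a\<in>{..<p}. ?gh (?row a))"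
    using row by (intro arg_cong[where f = \<phi>] restrict_ext) simp
  also have "\<dots> = g (\<lambda>i\<in>{..<m}. \<phi> (\<lambda>a\<in>{..<p}. hs i (?row a)))"
    using Fg row ops_apply_in[OF hs] unfolding commutes_def by auto
  also have "(\<lambda>i\<in>{..<m}. \<phi> (\<lambda>a\<in>{..<p}. hs i (?row a))) = (\<lambda>i\<in>{..<m}. hs i ?col)"
    using Fhs x unfolding commutes_def by (intro restrict_ext) auto
  finally show "\<phi> (\<lambda>a\<in>{..<p}. restrict ?gh (tuples A n) (?row a)) = restrict ?gh (tuples A n) ?col"
    using col by (simp only: restrict_apply')
qed

lemma is_clone_centralizer:
  assumes F: "F \<subseteq> ops A"
  shows "is_clone A (centralizer A F)"
  unfolding is_clone_def
proof (intro conjI allI impI ballI)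
  show "centralizer A F \<subseteq> ops A" by (rule centralizer_subset_ops)
next
  fix n i :: nat assume "0 < n \<and> i < n"
  then have "commutes A (p, \<phi>) (proj A n i)" if "(p, \<phi>) \<in> F" for p \<phi>
    using F that by (blast intro: commutes_proj)
  then show "proj A n i \<in> centralizer A F"
    using \<open>0 < n \<and> i < n\<close> proj_in_ops unfolding centralizer_def by auto
next
  fix G n hs assume G: "G \<in> centralizer A F"
    and hs: "0 < n \<and> (\<forall>i<fst G. (n, hs i) \<in> centralizer A F)"
  obtain m g where Gm: "G = (m, g)" by fastforce
  have ops: "(m, g) \<in> ops A" "\<And>i. i < m \<Longrightarrow> (n, hs i) \<in> ops A"
    using G hs centralizer_subset_ops unfolding Gm by auto
  have "commutes A (p, \<phi>) (compose A (m, g) n hs)" if "(p, \<phi>) \<in> F" for p \<phi>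
    using that F G hs ops unfolding Gm centralizer_def by (auto intro!: commutes_compose)
  then show "compose A G n hs \<in> centralizer A F"
    using hs ops unfolding Gm centralizer_def by (auto intro: compose_in_ops)
qed

lemma clone_gen_least: "is_clone A C \<Longrightarrow> F \<subseteq> C \<Longrightarrow> clone_gen A F \<subseteq> C"
  unfolding clone_gen_def by blast

lemma unary_part_subset: "unary_part G \<subseteq> G"
  unfolding unary_part_def by auto

definition unary_op :: "'a set \<Rightarrow> ('a \<Rightarrow> 'a) \<Rightarrow> nat \<times> ((nat \<Rightarrow> 'a) \<Rightarrow> 'a)" where
  "unary_op A f = (1, \<lambda>x\<in>tuples A 1. f (x 0))"

lemma unary_op_in_ops: "f \<in> A \<rightarrow> A \<Longrightarrow> unary_op A f \<in> ops A"
  unfolding unary_op_def ops_def tuples_def by auto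

lemma unary_op_apply: "v \<in> A \<Longrightarrow> snd (unary_op A f) (\<lambda>i\<in>{..<1}. v) = f v"
  unfolding unary_op_def tuples_def by auto

lemma commutes_unary_opI:
  assumes h: "h \<in> tuples A n \<rightarrow> A"
    and comm: "\<And>y. y \<in> tuples A n \<Longrightarrow> f (h y) = h (\<lambda>j\<in>{..<n}. f (y j))"
  shows "commutes A (unary_op A f) (n, h)"
proof -
  let ?u = "snd (unary_op A f)"
  have "?u (\<lambda>i\<in>{..<1}. h (\<lambda>j\<in>{..<n}. x i j)) = h (\<lambda>j\<in>{..<n}. ?u (\<lambda>i\<in>{..<1}. x i j))"
    if x: "\<forall>i<1. \<forall>j<n. x i j \<in> A" for x :: "nat \<Rightarrow> nat \<Rightarrow> 'a"
  proof -
    let ?y = "\<lambda>j\<in>{..<n}. x 0 j"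
    have y: "?y \<in> tuples A n" using x by (auto intro: tuples_restrict)
    have "?u (\<lambda>i\<in>{..<1}. h (\<lambda>j\<in>{..<n}. x i j)) = ?u (\<lambda>i\<in>{..<1}. h ?y)"
      by (intro arg_cong[where f = ?u] restrict_ext) auto
    also have "\<dots> = f (h ?y)" using h y by (intro unary_op_apply) auto
    also have "\<dots> = h (\<lambda>j\<in>{..<n}. f (?y j))" using comm y by blast
    also have "(\<lambda>j\<in>{..<n}. f (?y j)) = (\<lambda>j\<in>{..<n}. ?u (\<lambda>i\<in>{..<1}. x i j))"
    proof (intro restrict_ext)
      fix j assume "j \<in> {..<n}"
      then have "(\<lambda>i\<in>{..<1}. x i j) = (\<lambda>i\<in>{..<1}. x 0 j)" by (intro restrict_ext) auto
      then show "f (?y j) = ?u (\<lambda>i\<in>{..<1}. x i j)"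
        using \<open>j \<in> {..<n}\<close> x unary_op_apply by (metis lessThan_iff less_one restrict_apply')
    qed
    finally show ?thesis .
  qed
  then show ?thesis unfolding commutes_def by (simp add: unary_op_def del: lessThan_iff)
qed

lemma commutes_unary_opD:
  assumes comm: "commutes A (unary_op A f) (n, h)"
    and h: "h \<in> tuples A n \<rightarrow> A" and y: "y \<in> tuples A n"
  shows "f (h y) = h (\<lambda>j\<in>{..<n}. f (y j))"
proof -
  let ?u = "snd (unary_op A f)"
  have yA: "\<forall>j<n. y j \<in> A" using y unfolding tuples_def by auto
  have "?u (\<lambda>i\<in>{..<1}. h (\<lambda>j\<in>{..<n}. y j)) = h (\<lambda>j\<in>{..<n}. ?u (\<lambda>i\<in>{..<1}. y j))"
    using comm yA unfolding commutes_def unary_op_def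
    by (simp del: lessThan_iff)
  moreover have "(\<lambda>j\<in>{..<n}. ?u (\<lambda>i\<in>{..<1}. y j)) = (\<lambda>j\<in>{..<n}. f (y j))"
    using yA by (intro restrict_ext unary_op_apply) auto
  ultimately show ?thesis
    using y h unary_op_apply by (metis PiE_restrict Pi_mem tuples_def)
qed

lemma centralizer_unary_opD:
  assumes H: "(n, h) \<in> centralizer A (unary_op A ` F)" and "f \<in> F" and "y \<in> tuples A n"
  shows "f (h y) = h (\<lambda>j\<in>{..<n}. f (y j))"
proof -
  have "h \<in> tuples A n \<rightarrow> A" using H centralizer_subset_ops ops_apply_in by blast
  then show ?thesis
    using assms commutes_unary_opD unfolding centralizer_def by blast
qed

definition merging_maps :: "'a set \<Rightarrow> 'a \<Rightarrow> 'a \<Rightarrow> ('a \<Rightarrow> 'a) set" where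
  "merging_maps A a b = {f \<in> A \<rightarrow> A. f a = a \<and> f b = a}"

lemma T_op_in_ops: "2 \<le> k \<Longrightarrow> T_op k \<in> ops {0..<k}"
  unfolding T_op_def Let_def ops_def by auto

lemma T_special_args_cover:
  fixes N :: nat
  assumes "(\<forall>p<N^2. z p = p div N + 1) \<or> (\<forall>p<N^2. z p = p mod N + 1)"
  shows "{1..N} \<subseteq> z ` {..<N^2}"
proof
  fix v :: nat assume v: "v \<in> {1..N}"
  have "(v - 1) * N < N^2" "v - 1 < N^2"
    using v by (auto simp: power2_eq_square intro: less_le_trans[of _ N])
  moreover have "(v - 1) * N div N + 1 = v" "(v - 1) mod N + 1 = v" using v by auto
  ultimately show "v \<in> z ` {..<N^2}" using assms by (metis image_eqI lessThan_iff)
qed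

lemma T_op_merged_args:
  assumes k: "2 \<le> k" and f: "f \<in> merging_maps {0..<k} 0 1"
    and y: "y \<in> tuples {0..<k} ((k - 1)^2)"
  shows "snd (T_op k) (\<lambda>j\<in>{..<(k - 1)^2}. f (y j)) = 0"
proof (rule ccontr)
  define N where "N = k - 1"
  let ?z = "\<lambda>j\<in>{..<N^2}. f (y j)"
  assume "snd (T_op k) (\<lambda>j\<in>{..<(k - 1)^2}. f (y j)) \<noteq> 0"
  moreover have "?z \<in> tuples {0..<k} (N^2)"
    using y f unfolding N_def tuples_def merging_maps_def by auto
  ultimately have "(\<forall>p<N^2. ?z p = p div N + 1) \<or> (\<forall>p<N^2. ?z p = p mod N + 1)"
    unfolding T_op_def N_def Let_def by (auto split: if_splits)
  then have "{1..N} \<subseteq> ?z ` {..<N^2}" by (rule T_special_args_cover)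
  also have "\<dots> \<subseteq> f ` {0..<k}" using y unfolding N_def tuples_def by auto
  finally have "insert (f 0) {1..N} \<subseteq> f ` {0..<k}" using k by auto
  moreover have "insert (f 0) {1..N} = {0..<k}"
    using f k unfolding merging_maps_def N_def by auto
  ultimately have "{0..<k} \<subseteq> f ` {0..<k}" by (simp only: insert_subset)
  then have "inj_on f {0..<k}" by (simp add: finite_surj_inj)
  then have "(0::nat) = 1"
    by (rule inj_onD) (use f k in \<open>auto simp: merging_maps_def\<close>)
  then show False by simp
qed

lemma unary_op_merging_map_in_centralizer_T_op:
  assumes k: "2 \<le> k" and f: "f \<in> merging_maps {0..<k} 0 1"
  shows "unary_op {0..<k} f \<in> unary_part (centralizer {0..<k} {T_op k})"
proof -
  define N where "N = k - 1"
  define t where "t = snd (T_op k)"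
  have T: "T_op k = (N^2, t)" unfolding t_def N_def T_op_def Let_def by simp
  have t_01: "t y \<in> {0, 1}" if "y \<in> tuples {0..<k} (N^2)" for y
    using that unfolding t_def T_op_def N_def Let_def by simp
  have "f (t y) = t (\<lambda>j\<in>{..<N^2}. f (y j))" if y: "y \<in> tuples {0..<k} (N^2)" for y
    using T_op_merged_args[OF k f] t_01[OF y] y f
    unfolding t_def N_def merging_maps_def by auto
  moreover have "t \<in> tuples {0..<k} (N^2) \<rightarrow> {0..<k}" using t_01 k by fastforce
  ultimately have "commutes {0..<k} (unary_op {0..<k} f) (T_op k)"
    unfolding T by (intro commutes_unary_opI)
  then have "commutes {0..<k} (T_op k) (unary_op {0..<k} f)" using commutes_sym by blast
  moreover have "unary_op {0..<k} f \<in> ops {0..<k}"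
    using f unary_op_in_ops unfolding merging_maps_def by blast
  moreover have "fst (unary_op {0..<k} f) = 1" by (simp add: unary_op_def)
  ultimately show ?thesis unfolding unary_part_def centralizer_def by auto
qed

lemma merging_map_retract_onto:
  assumes U: "U \<subseteq> A" "a \<in> U" "U \<noteq> A" and x: "x \<in> tuples A n" "\<forall>j<n. x j \<in> U"
  obtains f y where "f \<in> merging_maps A a b" "f ` A \<subseteq> U" "y \<in> tuples A n"
    "x = (\<lambda>j\<in>{..<n}. f (y j))"
proof (cases "b \<in> U")
  case False
  let ?f = "\<lambda>v. if v \<in> U then v else a"
  have "x = (\<lambda>j\<in>{..<n}. x j)" using x(1) by (simp add: tuples_def)
  also have "\<dots> = (\<lambda>j\<in>{..<n}. ?f (x j))" using x(2) by (intro restrict_ext) auto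
  finally have "x = (\<lambda>j\<in>{..<n}. ?f (x j))" .
  moreover have "?f \<in> merging_maps A a b" "?f ` A \<subseteq> U"
    using U False unfolding merging_maps_def by (auto split: if_split_asm)
  ultimately show ?thesis using that x(1) by blast
next
  case True
  \<comment> \<open>f must send b to a, so a point c outside U stands in for b in y.\<close>
  obtain c where c: "c \<in> A" "c \<notin> U" using U by blast
  let ?f = "\<lambda>v. if v = c then b else if v \<in> U - {b} then v else a"
  let ?y = "\<lambda>j\<in>{..<n}. if x j = b then c else x j"
  have "x = (\<lambda>j\<in>{..<n}. x j)" using x(1) by (simp add: tuples_def)
  also have "\<dots> = (\<lambda>j\<in>{..<n}. ?f (?y j))" using x(2) c by (intro restrict_ext) auto
  finally have "x = (\<lambda>j\<in>{..<n}. ?f (?y j))" .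
  moreover have "?y \<in> tuples A n" using x c unfolding tuples_def by auto
  moreover have "?f ` A \<subseteq> U" "?f a = a" "?f b = a" using U c True by auto
  then have "?f \<in> merging_maps A a b" using U unfolding merging_maps_def by blast
  ultimately show ?thesis using that \<open>?f ` A \<subseteq> U\<close> by blast
qed

lemma centralizer_merging_maps_Pol_unary:
  "centralizer A (unary_op A ` merging_maps A a b) \<subseteq> Pol_unary A {U. U \<subseteq> A \<and> a \<in> U}"
proof
  fix H assume H: "H \<in> centralizer A (unary_op A ` merging_maps A a b)"
  obtain n h where Hn: "H = (n, h)" by fastforce
  have h: "(n, h) \<in> ops A" using H centralizer_subset_ops unfolding Hn by blast
  have "h x \<in> U" if U: "U \<subseteq> A" "a \<in> U" and x: "x \<in> tuples A n" "\<forall>i<n. x i \<in> U" for U x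
  proof (cases "U = A")
    case True
    then show ?thesis using ops_apply_in[OF h x(1)] by simp
  next
    case False
    obtain f y where f: "f \<in> merging_maps A a b" "f ` A \<subseteq> U" and y: "y \<in> tuples A n"
      and xy: "x = (\<lambda>j\<in>{..<n}. f (y j))"
      using merging_map_retract_onto[OF U False x] .
    have "h x = f (h y)" using centralizer_unary_opD[OF H[unfolded Hn] f(1) y] xy by simp
    then show ?thesis using f(2) ops_apply_in[OF h y] by auto
  qed
  then show "H \<in> Pol_unary A {U. U \<subseteq> A \<and> a \<in> U}"
    using h unfolding Hn Pol_unary_def by auto
qed

lemma merging_map_class_representative:
  assumes \<theta>: "equiv A \<theta>" and ab: "(a, b) \<in> \<theta>"
  obtains f where "f \<in> merging_maps A a b" "\<And>v. v \<in> A \<Longrightarrow> (v, f v) \<in> \<theta>"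
    "\<And>v w. (v, w) \<in> \<theta> \<Longrightarrow> f v = f w"
proof -
  define f where "f v = (if v \<in> \<theta> `` {a} then a else SOME w. w \<in> \<theta> `` {v})" for v
  have sub: "\<theta> \<subseteq> A \<times> A" and refl: "\<And>v. v \<in> A \<Longrightarrow> (v, v) \<in> \<theta>"
    and sym: "\<And>v w. (v, w) \<in> \<theta> \<Longrightarrow> (w, v) \<in> \<theta>"
    and trans: "\<And>u v w. (u, v) \<in> \<theta> \<Longrightarrow> (v, w) \<in> \<theta> \<Longrightarrow> (u, w) \<in> \<theta>"
    using \<theta> unfolding equiv_def refl_on_def sym_def trans_def by blast+
  have rep: "(v, f v) \<in> \<theta>" if "v \<in> A" for v
    using sym refl[OF that] unfolding f_def by (auto intro: someI)
  have on_classes: "f v = f w" if "(v, w) \<in> \<theta>" for v w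
    using equiv_class_eq[OF \<theta> that] trans[OF _ that] trans[OF _ sym[OF that]]
    unfolding f_def by auto
  have "f \<in> A \<rightarrow> A" using rep sub by blast
  moreover have "f a = a" "f b = a" using ab sub refl[of a] unfolding f_def by auto
  ultimately have "f \<in> merging_maps A a b" unfolding merging_maps_def by blast
  with rep on_classes show ?thesis using that by blast
qed

lemma centralizer_merging_maps_Pol_binary:
  "centralizer A (unary_op A ` merging_maps A a b)
     \<subseteq> Pol_binary A {\<theta>. equiv A \<theta> \<and> (a, b) \<in> \<theta>}"
proof
  fix H assume H: "H \<in> centralizer A (unary_op A ` merging_maps A a b)"
  obtain n h where Hn: "H = (n, h)" by fastforce
  have h: "(n, h) \<in> ops A" using H centralizer_subset_ops unfolding Hn by blast
  have "(h x, h y) \<in> \<theta>" if \<theta>: "equiv A \<theta>" "(a, b) \<in> \<theta>"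
    and x: "x \<in> tuples A n" and y: "y \<in> tuples A n" and xy: "\<forall>i<n. (x i, y i) \<in> \<theta>" for \<theta> x y
  proof -
    obtain f where f: "f \<in> merging_maps A a b" and rep: "\<And>v. v \<in> A \<Longrightarrow> (v, f v) \<in> \<theta>"
      and on_classes: "\<And>v w. (v, w) \<in> \<theta> \<Longrightarrow> f v = f w"
      using merging_map_class_representative[OF \<theta>] by blast
    have "f (h x) = h (\<lambda>j\<in>{..<n}. f (x j))" using centralizer_unary_opD[OF H[unfolded Hn] f x] .
    also have "(\<lambda>j\<in>{..<n}. f (x j)) = (\<lambda>j\<in>{..<n}. f (y j))"
      using xy on_classes by (intro restrict_ext) auto
    also have "h \<dots> = f (h y)" using centralizer_unary_opD[OF H[unfolded Hn] f y] by simp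
    finally have "f (h x) = f (h y)" .
    moreover have "(h x, f (h x)) \<in> \<theta>" "(h y, f (h y)) \<in> \<theta>"
      using rep ops_apply_in[OF h x] ops_apply_in[OF h y] by auto
    ultimately show ?thesis using \<theta>(1) by (metis equiv_def symE transE)
  qed
  then show "H \<in> Pol_binary A {\<theta>. equiv A \<theta> \<and> (a, b) \<in> \<theta>}"
    using h unfolding Hn Pol_binary_def by auto
qed

theorem lemma3p5:
  fixes k :: nat
  assumes "k \<ge> 3"
  shows "clone_gen {0..<k} {T_op k} \<subseteq> centralizer {0..<k} (centralizer {0..<k} {T_op k})
       \<and> centralizer {0..<k} (centralizer {0..<k} {T_op k})
           \<subseteq> centralizer {0..<k} (unary_part (centralizer {0..<k} {T_op k}))
       \<and> centralizer {0..<k} (unary_part (centralizer {0..<k} {T_op k}))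
           \<subseteq> Pol_unary {0..<k} {U. U \<subseteq> {0..<k} \<and> 0 \<in> U}
             \<inter> Pol_binary {0..<k} {\<theta>. equiv {0..<k} \<theta> \<and> (0, 1) \<in> \<theta>}"
proof (intro conjI)
  let ?A = "{0..<k}"
  have T: "{T_op k} \<subseteq> ops ?A" using assms T_op_in_ops by simp
  show "clone_gen ?A {T_op k} \<subseteq> centralizer ?A (centralizer ?A {T_op k})"
    using T centralizer_subset_ops
    by (intro clone_gen_least is_clone_centralizer subset_centralizer_centralizer)
  show "centralizer ?A (centralizer ?A {T_op k})
      \<subseteq> centralizer ?A (unary_part (centralizer ?A {T_op k}))"
    by (intro centralizer_antimono unary_part_subset)
  have "unary_op ?A ` merging_maps ?A 0 1 \<subseteq> unary_part (centralizer ?A {T_op k})"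
    using assms unary_op_merging_map_in_centralizer_T_op by auto
  then have "centralizer ?A (unary_part (centralizer ?A {T_op k}))
      \<subseteq> centralizer ?A (unary_op ?A ` merging_maps ?A 0 1)"
    by (rule centralizer_antimono)
  also have "\<dots> \<subseteq> Pol_unary ?A {U. U \<subseteq> ?A \<and> 0 \<in> U}
      \<inter> Pol_binary ?A {\<theta>. equiv ?A \<theta> \<and> (0, 1) \<in> \<theta>}"
    by (intro Int_greatest centralizer_merging_maps_Pol_unary centralizer_merging_maps_Pol_binary)
  finally show "centralizer ?A (unary_part (centralizer ?A {T_op k}))
      \<subseteq> Pol_unary ?A {U. U \<subseteq> ?A \<and> 0 \<in> U} \<inter> Pol_binary ?A {\<theta>. equiv ?A \<theta> \<and> (0, 1) \<in> \<theta>}" .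
qed

end
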